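(* Let $x,y$ be sequences, $n=|x|+|y|\ge 2$, and let $0<t\le 1/4$. Let $L$ be a longest common subsequence of $x$ and $y$ with $|L|=n^{3/4+t}$. Let $f$ be a power of $2$ with $1\le f<n^{1/4}$ such that $L'=\mathsf{Project}(L,\Sigma_{[f..2f)}(L))$ satisfies $|L'|\ge |L|/(2\log_2 n)$. Let $x'=\mathsf{Project}(x,\Sigma_{[f..n]}(x))$, and let $\pi$ be a repetition-free sequence whose set of symbols is exactly the set of symbols occurring in $x'$. Let $R$ be a subsequence of $L'$ containing exactly one occurrence of each symbol occurring in $L'$, and assume $|\mathsf{LIS}_\pi(R)|<n^t/\log_2 n$. Consider any run of the peeling process on $x'$: $x^0=x'$, and while $x^i$ is nonempty, $\pi^i$ is any subsequence of $x^i$ that is strictly decreasing with respect to $<_\pi$ with $|\pi^i|\ge|\mathsf{LDS}_\pi(x^i)|/2$, and $x^{i+1}=\mathsf{Exclude}(x^i,\pi^i)$. Then there is an iteration $i$ of this process with $|\mathsf{LIS}_{\pi^i}(y)|\ge n^t/200$.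
   Context: For a symbol $\sigma$, $\#_\sigma(x)$ is the number of occurrences of $\sigma$ in $x$; $\Sigma_{[a..b]}(x)=\{\sigma : a\le\#_\sigma(x)\le b\}$ and $\Sigma_{[a..b)}(x)=\{\sigma : a\le\#_\sigma(x)<b\}$. For a set $S$ of symbols (or a sequence, standing for its set of symbols), $\mathsf{Project}(x,S)$ is the subsequence of $x$ of entries whose symbol is in $S$, and $\mathsf{Exclude}(x,S)$ the subsequence of entries whose symbol is not in $S$. A sequence is repetition-free if its entries are pairwise distinct; a repetition-free $\pi=\pi_1\dots\pi_k$ defines the strict total order $\pi_i<_\pi\pi_j$ iff $i<j$. For any sequence $x$, $\mathsf{LIS}_\pi(x)$ (resp. $\mathsf{LDS}_\pi(x)$) is a longest subsequence of $\mathsf{Project}(x,\pi)$ that is strictly increasing (resp. strictly decreasing) with respect to $<_\pi$. *)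

theory Defs
  imports Complex_Main "HOL-Library.Sublist"
begin

definition sigma_cc :: "nat \<Rightarrow> nat \<Rightarrow> 'a list \<Rightarrow> 'a set" where
  "sigma_cc a b x = {s. a \<le> count_list x s \<and> count_list x s \<le> b}"

definition sigma_co :: "nat \<Rightarrow> nat \<Rightarrow> 'a list \<Rightarrow> 'a set" where
  "sigma_co a b x = {s. a \<le> count_list x s \<and> count_list x s < b}"

definition project :: "'a list \<Rightarrow> 'a set \<Rightarrow> 'a list" where
  "project x S = filter (\<lambda>c. c \<in> S) x"

definition exclude :: "'a list \<Rightarrow> 'a set \<Rightarrow> 'a list" where
  "exclude x S = filter (\<lambda>c. c \<notin> S) x"

definition lt_seq :: "'a list \<Rightarrow> 'a \<Rightarrow> 'a \<Rightarrow> bool" where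
  "lt_seq p a b = (\<exists>i j. i < j \<and> j < length p \<and> p ! i = a \<and> p ! j = b)"

definition lis_len :: "'a list \<Rightarrow> 'a list \<Rightarrow> nat" where
  "lis_len p x = Max {length s | s. subseq s (project x (set p)) \<and> sorted_wrt (lt_seq p) s}"

definition lds_len :: "'a list \<Rightarrow> 'a list \<Rightarrow> nat" where
  "lds_len p x = Max {length s | s. subseq s (project x (set p)) \<and> sorted_wrt (\<lambda>a b. lt_seq p b a) s}"

definition is_lcs :: "'a list \<Rightarrow> 'a list \<Rightarrow> 'a list \<Rightarrow> bool" where
  "is_lcs L x y = (subseq L x \<and> subseq L y \<and>
     (\<forall>M. subseq M x \<and> subseq M y \<longrightarrow> length M \<le> length L))"

end

theory Submission
  imports Defs
begin

text \<open>
  Suppose every round has LIS_{pi^i}(y) < n^t/200. An Erdos-Szekeres argument gives a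
  pi-decreasing subsequence D of R with |R| <= LIS_pi(R) * |D|; D is a common subsequence of x'
  and y. As pi^i and D are both pi-decreasing, the symbols of D in pi^i appear in D in
  increasing pi^i-order, and D lies in y, so every round removes fewer than n^t/200 symbols
  of D. Conversely, while half of D survives in x^i it is a long pi-decreasing subsequence of
  x^i, so pi^i removes more than |D|/4 symbols; since x' has at most n/f distinct symbols,
  this bounds the number of such rounds and yields |D|^2 < 8 (n^t/200) (n/f). Combined with
  n^(3/4+t) = |L| <= 2 log n |L'| <= 4 f log n LIS_pi(R) |D| this contradicts f < n^(1/4).
\<close>

lemma lt_seq_irrefl: "distinct p \<Longrightarrow> \<not> lt_seq p a a"
  unfolding lt_seq_def by (metis less_trans nat_neq_iff nth_eq_iff_index_eq)

lemma lt_seq_trans: "distinct p \<Longrightarrow> lt_seq p a b \<Longrightarrow> lt_seq p b c \<Longrightarrow> lt_seq p a c"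
  unfolding lt_seq_def by (metis less_trans nth_eq_iff_index_eq)

lemma lt_seq_asym: "distinct p \<Longrightarrow> lt_seq p a b \<Longrightarrow> \<not> lt_seq p b a"
  using lt_seq_trans lt_seq_irrefl by metis

lemma lt_seq_total:
  "a \<in> set p \<Longrightarrow> b \<in> set p \<Longrightarrow> a \<noteq> b \<Longrightarrow> lt_seq p a b \<or> lt_seq p b a"
  unfolding lt_seq_def in_set_conv_nth by (metis nat_neq_iff)

lemma sorted_wrt_lt_seq: "sorted_wrt r q \<Longrightarrow> lt_seq q a b \<Longrightarrow> r a b"
  unfolding lt_seq_def sorted_wrt_iff_nth_less by blast

lemma lt_seq_of_decreasing:
  assumes "distinct p" and "sorted_wrt (\<lambda>a b. lt_seq p b a) q"
    and "a \<in> set q" and "b \<in> set q" and "lt_seq p b a"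
  shows "lt_seq q a b"
proof -
  have "a \<noteq> b"
    using assms(1,5) lt_seq_irrefl by metis
  moreover have "\<not> lt_seq q b a"
    using sorted_wrt_lt_seq[OF assms(2)] lt_seq_asym[OF assms(1) assms(5)] by blast
  ultimately show ?thesis
    using lt_seq_total assms(3,4) by metis
qed

lemma sorted_wrt_distinct: "sorted_wrt r xs \<Longrightarrow> (\<And>x. \<not> r x x) \<Longrightarrow> distinct xs"
  by (induction xs) auto

lemma sorted_wrt_last:
  assumes "sorted_wrt r xs" and "y \<in> set (butlast xs)"
  shows "r y (last xs)"
proof -
  have "xs \<noteq> []" using assms(2) by auto
  hence "sorted_wrt r (butlast xs @ [last xs])" using assms(1) by simp
  thus ?thesis using assms(2) by (simp add: sorted_wrt_append)
qed

lemma finite_subseq_lengths: "finite {length s |s. subseq s xs \<and> Q s}"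
  by (rule finite_subset[of _ "{..length xs}"]) (auto dest: list_emb_length)

lemma Max_subseq_length_ge:
  "subseq s xs \<Longrightarrow> Q s \<Longrightarrow> length s \<le> Max {length s |s. subseq s xs \<and> Q s}"
  by (rule Max_ge[OF finite_subseq_lengths]) blast

lemma Max_subseq_length_attained:
  assumes "subseq s xs" and "Q s"
  obtains s' where "subseq s' xs" and "Q s'" and "length s' = Max {length s |s. subseq s xs \<and> Q s}"
proof -
  have "Max {length s |s. subseq s xs \<and> Q s} \<in> {length s |s. subseq s xs \<and> Q s}"
    using assms by (intro Max_in[OF finite_subseq_lengths]) blast
  then obtain s' where "subseq s' xs" "Q s'" "length s' = Max {length s |s. subseq s xs \<and> Q s}"
    by force
  thus ?thesis by (rule that)
qed

lemma lis_len_ge: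
  "subseq s (project x (set p)) \<Longrightarrow> sorted_wrt (lt_seq p) s \<Longrightarrow> length s \<le> lis_len p x"
  unfolding lis_len_def by (rule Max_subseq_length_ge)

lemma lds_len_ge:
  "subseq s (project x (set p)) \<Longrightarrow> sorted_wrt (\<lambda>a b. lt_seq p b a) s \<Longrightarrow> length s \<le> lds_len p x"
  unfolding lds_len_def by (rule Max_subseq_length_ge)

lemma subseq_project: "subseq s x \<Longrightarrow> set s \<subseteq> S \<Longrightarrow> subseq s (project x S)"
  unfolding project_def by (metis filter_True subsetD subseq_filter)

lemma project_superset: "set x \<subseteq> S \<Longrightarrow> project x S = x"
  unfolding project_def by (auto intro: filter_True)

lemma length_filter_mem_distinct:
  "distinct xs \<Longrightarrow> length (filter (\<lambda>c. c \<in> A) xs) = card (set xs \<inter> A)"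
  by (metis distinct_card distinct_filter set_filter Int_def Collect_mem_eq)

lemma count_list_filter: "count_list (filter P xs) a = (if P a then count_list xs a else 0)"
  by (induction xs) auto

lemma count_list_subseq: "subseq xs ys \<Longrightarrow> count_list xs a \<le> count_list ys a"
  unfolding count_list_eq_length_filter by (meson list_emb_length subseq_filter)

lemma length_le_mult_card_set:
  "(\<And>a. a \<in> set xs \<Longrightarrow> count_list xs a \<le> b) \<Longrightarrow> length xs \<le> b * card (set xs)"
  using sum_mono[of "set xs" "count_list xs" "\<lambda>_. b"] by (simp add: sum_count_set mult.commute)

lemma mult_card_set_le_length:
  "(\<And>a. a \<in> set xs \<Longrightarrow> b \<le> count_list xs a) \<Longrightarrow> b * card (set xs) \<le> length xs"
  using sum_mono[of "set xs" "\<lambda>_. b" "count_list xs"] by (simp add: sum_count_set mult.commute)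

lemma length_project_sigma_co_le:
  "length (project L (sigma_co a b L)) \<le> b * card (set (project L (sigma_co a b L)))"
  by (rule length_le_mult_card_set) (auto simp: project_def count_list_filter sigma_co_def)

lemma card_set_project_sigma_cc_le:
  "a * card (set (project x (sigma_cc a b x))) \<le> length x"
proof -
  have "a * card (set (project x (sigma_cc a b x))) \<le> length (project x (sigma_cc a b x))"
    by (rule mult_card_set_le_length) (auto simp: project_def count_list_filter sigma_cc_def)
  also have "\<dots> \<le> length x"
    by (simp add: project_def)
  finally show ?thesis .
qed

lemma subseq_project_sigma_co_sigma_cc:
  assumes "subseq L x" and "length x \<le> n"
  shows "subseq (project L (sigma_co a b L)) (project x (sigma_cc a n x))"
proof (rule subseq_project)
  show "subseq (project L (sigma_co a b L)) x"
    using assms(1) unfolding project_def by (rule subseq_order.order_trans[OF subseq_filter_left])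
  show "set (project L (sigma_co a b L)) \<subseteq> sigma_cc a n x"
  proof
    fix s assume "s \<in> set (project L (sigma_co a b L))"
    hence "a \<le> count_list L s"
      by (simp add: project_def sigma_co_def)
    also have "\<dots> \<le> count_list x s"
      using assms(1) by (rule count_list_subseq)
    finally show "s \<in> sigma_cc a n x"
      using count_le_length[of x s] assms(2) by (simp add: sigma_cc_def)
  qed
qed

section \<open>An Erdos-Szekeres bound\<close>

lemma exists_large_fiber:
  assumes "finite A" and "finite B" and "B \<noteq> {}" and "E ` A \<subseteq> B"
  shows "\<exists>v\<in>B. card A \<le> card B * card {i\<in>A. E i = v}"
proof (rule ccontr)
  assume "\<not> ?thesis"
  hence small: "card B * card {i\<in>A. E i = v} < card A" if "v \<in> B" for v
    using that by (auto simp: not_le)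
  have "card A \<le> card (\<Union>v\<in>B. {i\<in>A. E i = v})"
    using assms by (intro card_mono) auto
  also have "\<dots> \<le> (\<Sum>v\<in>B. card {i\<in>A. E i = v})"
    using assms(2) by (rule card_UN_le)
  finally have "card B * card A \<le> (\<Sum>v\<in>B. card B * card {i\<in>A. E i = v})"
    by (simp add: flip: sum_distrib_left)
  also have "\<dots> < (\<Sum>v\<in>B. card A)"
    using assms(2,3) small by (intro sum_strict_mono) auto
  finally show False by simp
qed

text \<open>The Erdos-Szekeres labelling: symbols of R with equal labels are pairwise decreasing.\<close>

definition lis_ending_at :: "'a list \<Rightarrow> 'a list \<Rightarrow> nat \<Rightarrow> nat" where
  "lis_ending_at p R i = Max {length s |s. subseq s (take (Suc i) R) \<and>
     (sorted_wrt (lt_seq p) s \<and> s \<noteq> [] \<and> last s = R ! i)}"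

lemma lis_ending_at_attained:
  assumes "i < length R"
  obtains s where "subseq s (take (Suc i) R)" and "sorted_wrt (lt_seq p) s" and "s \<noteq> []"
    and "last s = R ! i" and "length s = lis_ending_at p R i"
proof -
  have "subseq [R ! i] (take (Suc i) R)"
    using assms by (auto simp: subseq_singleton_left in_set_conv_nth intro!: exI[of _ i])
  moreover have "sorted_wrt (lt_seq p) [R ! i] \<and> [R ! i] \<noteq> [] \<and> last [R ! i] = R ! i"
    by simp
  ultimately obtain s where "subseq s (take (Suc i) R)"
      and "sorted_wrt (lt_seq p) s \<and> s \<noteq> [] \<and> last s = R ! i" and "length s = lis_ending_at p R i"
    unfolding lis_ending_at_def by (rule Max_subseq_length_attained)
  thus ?thesis
    using that by blast
qed

lemma lis_ending_at_pos: "i < length R \<Longrightarrow> 0 < lis_ending_at p R i"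
  by (erule lis_ending_at_attained[where p = p]) (metis length_greater_0_conv)

lemma lis_ending_at_le_lis_len:
  assumes "set R \<subseteq> set p" and "i < length R"
  shows "lis_ending_at p R i \<le> lis_len p R"
proof -
  obtain s where s: "subseq s (take (Suc i) R)" "sorted_wrt (lt_seq p) s"
      "length s = lis_ending_at p R i"
    using lis_ending_at_attained[OF assms(2)] by metis
  moreover have "subseq (take (Suc i) R) (project R (set p))"
    using assms(1) by (simp add: project_superset take_is_prefix prefix_imp_subseq)
  ultimately have "subseq s (project R (set p))"
    by (blast intro: subseq_order.order_trans)
  from lis_len_ge[OF this s(2)] show ?thesis using s(3) by simp
qed

lemma lis_ending_at_strict_mono:
  assumes "distinct p" and "i < j" and "j < length R" and "lt_seq p (R ! i) (R ! j)"
  shows "lis_ending_at p R i < lis_ending_at p R j"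
proof -
  obtain s where s: "subseq s (take (Suc i) R)" "sorted_wrt (lt_seq p) s" "s \<noteq> []"
      "last s = R ! i" "length s = lis_ending_at p R i"
    using lis_ending_at_attained[of i R p] assms(2,3) by auto
  have "subseq (take (Suc i) R) (take j R)"
    using assms(2) take_is_prefix[of "Suc i" "take j R"] by (simp add: min_absorb1 prefix_imp_subseq)
  hence "subseq (s @ [R ! j]) (take (Suc j) R)"
    using s(1) assms(3) by (auto simp: take_Suc_conv_app_nth intro: subseq_order.order_trans)
  moreover have "lt_seq p y (R ! j)" if "y \<in> set s" for y
  proof -
    have "y = last s \<or> y \<in> set (butlast s)"
      using that s(3) by (cases s rule: rev_cases) auto
    thus ?thesis
      using sorted_wrt_last[OF s(2)] s(4) assms(1,4) lt_seq_trans by metis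
  qed
  hence "sorted_wrt (lt_seq p) (s @ [R ! j])"
    using s(2) by (simp add: sorted_wrt_append)
  ultimately have "length (s @ [R ! j]) \<le> lis_ending_at p R j"
    unfolding lis_ending_at_def by (intro Max_subseq_length_ge) auto
  thus ?thesis using s(5) by simp
qed

lemma exists_long_decreasing_subseq:
  assumes "distinct p" and "distinct R" and "set R \<subseteq> set p"
  shows "\<exists>D. subseq D R \<and> sorted_wrt (\<lambda>a b. lt_seq p b a) D \<and> length R \<le> lis_len p R * length D"
proof (cases "R = []")
  case True
  thus ?thesis by (intro exI[of _ "[]"]) simp
next
  case False
  let ?E = "lis_ending_at p R" and ?N = "length R" and ?a = "lis_len p R"
  have E_range: "?E ` {..<?N} \<subseteq> {1..?a}"
    using lis_ending_at_pos lis_ending_at_le_lis_len[OF assms(3)] by (auto simp: Suc_le_eq)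
  moreover have "?E 0 \<in> {1..?a}"
    using E_range False by blast
  ultimately obtain v where v: "?N \<le> ?a * card {i \<in> {..<?N}. ?E i = v}"
    using exists_large_fiber[of "{..<?N}" "{1..?a}" ?E] by auto
  define I where "I = filter (\<lambda>i. ?E i = v) [0..<?N]"
  define D where "D = map (nth R) I"
  have "subseq D (map (nth R) [0..<?N])"
    unfolding D_def I_def by (intro subseq_map) simp
  hence D_sub: "subseq D R"
    by (simp add: map_nth)
  have "lt_seq p (R ! j) (R ! i)" if "i < j" "j < ?N" "?E i = ?E j" for i j
  proof -
    have "R ! i \<noteq> R ! j" "R ! i \<in> set p" "R ! j \<in> set p"
      using that assms(2,3) by (auto simp: nth_eq_iff_index_eq)
    moreover have "\<not> lt_seq p (R ! i) (R ! j)"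
      using lis_ending_at_strict_mono[OF assms(1) that(1,2)] that(3) by auto
    ultimately show ?thesis
      using lt_seq_total[of "R ! i" p "R ! j"] by blast
  qed
  moreover have "sorted_wrt (<) I"
    unfolding I_def by (intro sorted_wrt_filter) simp
  ultimately have "sorted_wrt (\<lambda>i j. lt_seq p (R ! j) (R ! i)) I"
    by (elim sorted_wrt_mono_rel[rotated]) (auto simp: I_def)
  hence "sorted_wrt (\<lambda>a b. lt_seq p b a) D"
    by (simp add: D_def sorted_wrt_map)
  moreover have "length D = card {i \<in> {..<?N}. ?E i = v}"
    by (simp add: D_def I_def length_filter_conv_card cong: conj_cong)
  ultimately show ?thesis
    using D_sub v by auto
qed

section \<open>The peeling process\<close>

text \<open>A run of the peeling process: xs i is x^i and ps i is pi^i.\<close>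

locale peeling_run =
  fixes p :: "'a list" and xs ps :: "nat \<Rightarrow> 'a list" and k :: nat
  assumes distinct_order: "distinct p"
    and xs0_subset: "set (xs 0) \<subseteq> set p"
    and ps_subseq: "i < k \<Longrightarrow> subseq (ps i) (xs i)"
    and ps_decreasing: "i < k \<Longrightarrow> sorted_wrt (\<lambda>a b. lt_seq p b a) (ps i)"
    and ps_long: "i < k \<Longrightarrow> lds_len p (xs i) \<le> 2 * length (ps i)"
    and xs_Suc: "i < k \<Longrightarrow> xs (Suc i) = exclude (xs i) (set (ps i))"
    and xs_k: "xs k = []"
begin

lemma set_xs_Suc: "i < k \<Longrightarrow> set (xs (Suc i)) = set (xs i) - set (ps i)"
  by (auto simp: xs_Suc exclude_def)

lemma set_ps_subset: "i < k \<Longrightarrow> set (ps i) \<subseteq> set (xs i)"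
  using ps_subseq by (blast elim: list_emb_set)

lemma set_xs_antimono: "i \<le> j \<Longrightarrow> j \<le> k \<Longrightarrow> set (xs j) \<subseteq> set (xs i)"
proof (induction j rule: dec_induct)
  case (step j)
  thus ?case using set_xs_Suc[of j] by auto
qed simp

lemma xs_eq_filter: "i \<le> k \<Longrightarrow> xs i = filter (\<lambda>c. c \<in> set (xs i)) (xs 0)"
proof (induction i)
  case (Suc i)
  hence "xs (Suc i) = filter (\<lambda>c. c \<notin> set (ps i)) (xs i)"
    by (simp add: xs_Suc exclude_def)
  also have "\<dots> = filter (\<lambda>c. c \<notin> set (ps i)) (filter (\<lambda>c. c \<in> set (xs i)) (xs 0))"
    using Suc by (intro arg_cong[where f = "filter (\<lambda>c. c \<notin> set (ps i))"]) simp
  also have "\<dots> = filter (\<lambda>c. c \<in> set (xs (Suc i))) (xs 0)"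
    using set_xs_Suc[of i] Suc.prems by (simp add: conj_commute)
  finally show ?case .
qed (simp add: filter_id_conv)

lemma distinct_ps: "i < k \<Longrightarrow> distinct (ps i)"
  using ps_decreasing sorted_wrt_distinct lt_seq_irrefl[OF distinct_order] by metis

lemma ps_disjoint:
  assumes "i \<noteq> j" and "i < k" and "j < k"
  shows "set (ps i) \<inter> set (ps j) = {}"
proof -
  have "set (ps i) \<inter> set (ps j) = {}" if "i < j" "j < k" for i j
    using set_ps_subset[of j] set_xs_antimono[of "Suc i" j] set_xs_Suc[of i] that by auto
  thus ?thesis
    using assms by (metis Int_commute nat_neq_iff)
qed

lemma sum_length_ps_le: "j \<le> k \<Longrightarrow> (\<Sum>i<j. length (ps i)) \<le> card (set (xs 0))"
proof -
  assume "j \<le> k"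
  hence "(\<Sum>i<j. length (ps i)) = card (\<Union>i<j. set (ps i))"
    using ps_disjoint distinct_ps by (subst card_UN_disjoint) (auto simp: distinct_card)
  also have "\<dots> \<le> card (set (xs 0))"
  proof (rule card_mono)
    show "(\<Union>i<j. set (ps i)) \<subseteq> set (xs 0)"
    proof (rule UN_least)
      fix i assume "i \<in> {..<j}"
      hence "i < k" using \<open>j \<le> k\<close> by simp
      thus "set (ps i) \<subseteq> set (xs 0)"
        using set_ps_subset set_xs_antimono[of 0 i] by force
    qed
  qed simp
  finally show ?thesis .
qed

context
  fixes D :: "'a list"
  assumes D_subseq: "subseq D (xs 0)" and D_decreasing: "sorted_wrt (\<lambda>a b. lt_seq p b a) D"
begin

lemma distinct_D: "distinct D"
  using D_decreasing sorted_wrt_distinct lt_seq_irrefl[OF distinct_order] by metis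

lemma card_D_inter_xs_le_lds: "i < k \<Longrightarrow> card (set D \<inter> set (xs i)) \<le> lds_len p (xs i)"
proof -
  assume "i < k"
  let ?W = "filter (\<lambda>c. c \<in> set (xs i)) D"
  have "filter (\<lambda>c. c \<in> set (xs i)) (xs 0) = xs i"
    using xs_eq_filter[of i] \<open>i < k\<close> by (metis less_imp_le)
  hence "subseq ?W (xs i)"
    using subseq_filter[OF D_subseq, of "\<lambda>c. c \<in> set (xs i)"] by simp
  moreover have "project (xs i) (set p) = xs i"
    using set_xs_antimono[of 0 i] xs0_subset \<open>i < k\<close> by (intro project_superset) auto
  moreover have "sorted_wrt (\<lambda>a b. lt_seq p b a) ?W"
    using D_decreasing by (rule sorted_wrt_filter)
  ultimately have "length ?W \<le> lds_len p (xs i)"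
    by (intro lds_len_ge) auto
  thus ?thesis
    by (simp add: length_filter_mem_distinct[OF distinct_D])
qed

lemma card_D_inter_ps_le_lis:
  assumes "subseq D y" and "i < k"
  shows "card (set D \<inter> set (ps i)) \<le> lis_len (ps i) y"
proof -
  let ?W = "filter (\<lambda>c. c \<in> set (ps i)) D"
  have "subseq ?W (project y (set (ps i)))"
    unfolding project_def using assms(1) by (rule subseq_filter)
  moreover have "sorted_wrt (lt_seq (ps i)) ?W"
    using sorted_wrt_filter[OF D_decreasing]
    by (rule sorted_wrt_mono_rel[rotated])
      (auto intro: lt_seq_of_decreasing[OF distinct_order ps_decreasing[OF assms(2)]])
  ultimately have "length ?W \<le> lis_len (ps i) y"
    by (rule lis_len_ge)
  thus ?thesis
    by (simp add: length_filter_mem_distinct[OF distinct_D])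
qed

lemma length_D_eq_surviving_plus_removed:
  "j \<le> k \<Longrightarrow> length D = card (set D \<inter> set (xs j)) + (\<Sum>i<j. card (set D \<inter> set (ps i)))"
proof (induction j)
  case 0
  have "set D \<subseteq> set (xs 0)"
    using D_subseq by (blast elim: list_emb_set)
  thus ?case
    using distinct_D by (simp add: Int_absorb2 distinct_card)
next
  case (Suc j)
  hence "j < k" by simp
  have split: "set D \<inter> set (xs j) = (set D \<inter> set (xs (Suc j))) \<union> (set D \<inter> set (ps j))"
    and disj: "(set D \<inter> set (xs (Suc j))) \<inter> (set D \<inter> set (ps j)) = {}"
    using set_xs_Suc[OF \<open>j < k\<close>] set_ps_subset[OF \<open>j < k\<close>] by auto
  have "card (set D \<inter> set (xs j)) = card (set D \<inter> set (xs (Suc j))) + card (set D \<inter> set (ps j))"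
    unfolding split using disj by (intro card_Un_disjoint) auto
  thus ?case
    using Suc by simp
qed

text \<open>The round j is the first one after which at most half of D survives.\<close>

lemma exists_halving_round:
  assumes "D \<noteq> []"
  obtains j where "0 < j" and "j \<le> k" and "j * length D < 4 * card (set (xs 0))"
    and "length D \<le> 2 * (\<Sum>i<j. card (set D \<inter> set (ps i)))"
proof -
  let ?d = "length D" and ?A = "\<lambda>i. card (set D \<inter> set (xs i))"
  define j where "j = (LEAST i. 2 * ?A i \<le> ?d)"
  have "2 * ?A k \<le> ?d"
    using xs_k by simp
  hence j_le: "j \<le> k" and A_j: "2 * ?A j \<le> ?d"
    unfolding j_def by (auto intro: Least_le LeastI)
  have A_before: "?d < 2 * ?A i" if "i < j" for i
    using not_less_Least[of i "\<lambda>i. 2 * ?A i \<le> ?d"] that unfolding j_def by simp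
  have "0 < j"
    using A_j length_D_eq_surviving_plus_removed[of 0] assms by (cases j) auto
  have "j * ?d = (\<Sum>i<j. ?d)"
    by simp
  also have "\<dots> < (\<Sum>i<j. 4 * length (ps i))"
  proof (rule sum_strict_mono)
    fix i assume "i \<in> {..<j}"
    hence "i < j" and "i < k"
      using j_le by auto
    have "?d < 2 * ?A i"
      using A_before \<open>i < j\<close> .
    also have "\<dots> \<le> 2 * lds_len p (xs i)"
      using card_D_inter_xs_le_lds \<open>i < k\<close> by simp
    also have "\<dots> \<le> 4 * length (ps i)"
      using ps_long \<open>i < k\<close> by fastforce
    finally show "?d < 4 * length (ps i)" .
  qed (use \<open>0 < j\<close> in auto)
  also have "\<dots> \<le> 4 * card (set (xs 0))"
    using sum_length_ps_le[OF j_le] by (simp add: sum_distrib_left[symmetric])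
  finally have "j * ?d < 4 * card (set (xs 0))" .
  moreover have "?d \<le> 2 * (\<Sum>i<j. card (set D \<inter> set (ps i)))"
    using length_D_eq_surviving_plus_removed[OF j_le] A_j by linarith
  ultimately show ?thesis
    using that \<open>0 < j\<close> j_le by blast
qed

lemma length_D_squared_bound:
  assumes "D \<noteq> []" and "subseq D y" and short: "\<And>i. i < k \<Longrightarrow> real (lis_len (ps i) y) < c"
  shows "real (length D) ^ 2 < 8 * c * card (set (xs 0))"
proof -
  have few: "real (card (set D \<inter> set (ps i))) < c" if "i < k" for i
    using card_D_inter_ps_le_lis[OF assms(2) that] short[OF that] by (meson of_nat_mono le_less_trans)
  obtain j where "0 < j" and "j \<le> k" and rounds: "j * length D < 4 * card (set (xs 0))"
    and halved: "length D \<le> 2 * (\<Sum>i<j. card (set D \<inter> set (ps i)))"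
    using exists_halving_round[OF assms(1)] .
  let ?d = "real (length D)"
  have "?d \<le> 2 * (\<Sum>i<j. real (card (set D \<inter> set (ps i))))"
    using halved by (simp flip: of_nat_sum)
  also have "\<dots> < 2 * (\<Sum>i<j. c)"
    using few \<open>0 < j\<close> \<open>j \<le> k\<close> by (intro mult_strict_left_mono sum_strict_mono) auto
  finally have d_lt: "?d < 2 * real j * c"
    by simp
  hence "0 < c"
    using assms(1) by (smt (verit) of_nat_0_le_iff mult_nonneg_nonpos)
  have "?d ^ 2 < 2 * real j * c * ?d"
    using d_lt assms(1) by (simp add: power2_eq_square)
  also have "\<dots> = 2 * c * real (j * length D)"
    by simp
  also have "\<dots> \<le> 2 * c * real (4 * card (set (xs 0)))"
    using rounds \<open>0 < c\<close> by (intro mult_left_mono of_nat_mono) auto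
  finally show ?thesis
    by simp
qed

end

end

lemma powr_bounds_contradiction:
  fixes n t f a d m l l' :: real
  assumes "2 \<le> n" and "t \<le> 1/4" and "1 \<le> f" and "f < n powr (1/4)" and "0 < d" and "0 \<le> m"
    and l: "l = n powr (3/4 + t)" and l': "l / (2 * log 2 n) \<le> l'" and "l' \<le> 2 * f * a * d"
    and lis: "a < n powr t / log 2 n"
    and lds: "d ^ 2 < 8 * (n powr t / 200) * m" and fm: "f * m \<le> n"
  shows False
proof -
  \<comment> \<open>The two bounds on d give u^6 < 128/200 u^6 for u = n^(1/4).\<close>
  define u w where "u = n powr (1/4)" and "w = n powr t"
  have "0 < u" "0 < w" and "w \<le> u" and "0 < log 2 n"
    using assms(1,2) by (auto simp: u_def w_def intro: powr_mono)
  have u4: "u ^ 4 = n"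
    using assms(1) by (simp add: u_def powr_power)
  have "n powr (3/4) = u ^ 3"
    using assms(1) by (simp add: u_def powr_power)
  hence "u ^ 3 * w = l"
    by (simp add: l w_def powr_add)
  also have "\<dots> \<le> 2 * log 2 n * l'"
    using l' \<open>0 < log 2 n\<close> by (simp add: field_simps)
  also have "\<dots> \<le> 2 * log 2 n * (2 * f * a * d)"
    using assms(9) \<open>0 < log 2 n\<close> by (intro mult_left_mono) auto
  also have "\<dots> = 4 * f * d * (a * log 2 n)"
    by (simp add: mult_ac)
  also have "\<dots> < 4 * f * d * w"
    using lis assms(3,5) \<open>0 < log 2 n\<close> by (simp add: w_def field_simps)
  finally have "u ^ 3 < 4 * f * d"
    using \<open>0 < w\<close> by simp
  hence "u ^ 3 * u ^ 3 < (4 * f * d) * (4 * f * d)"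
    using \<open>0 < u\<close> assms(3,5) by (intro mult_strict_mono) auto
  hence "u ^ 6 < 16 * f * (f * d ^ 2)"
    by (simp add: power2_eq_square mult_ac flip: power_add)
  also have "\<dots> \<le> 16 * f * (8 * (w / 200) * (f * m))"
    using lds assms(3) \<open>0 < w\<close> by (simp add: w_def mult_ac)
  also have "\<dots> \<le> 16 * u * (8 * (u / 200) * u ^ 4)"
    using fm u4 \<open>w \<le> u\<close> \<open>0 < w\<close> \<open>0 \<le> m\<close> assms(3,4) unfolding u_def
    by (intro mult_mono) auto
  finally show False
    using \<open>0 < u\<close> by (simp add: power_numeral_reduce)
qed

theorem mainTheorem6:
  fixes x y L L' x' p R :: "'a list" and n f :: nat and t :: real
    and xs ps :: "nat \<Rightarrow> 'a list" and k :: nat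
  assumes n_def: "n = length x + length y" and n_ge: "n \<ge> 2"
    and t_pos: "0 < t" and t_le: "t \<le> 1/4"
    and lcs: "is_lcs L x y" and L_len: "real (length L) = real n powr (3/4 + t)"
    and f_pow: "\<exists>j. f = 2 ^ j" and f_ge: "1 \<le> f" and f_lt: "real f < real n powr (1/4)"
    and L'_def: "L' = project L (sigma_co f (2*f) L)"
    and L'_len: "real (length L') \<ge> real (length L) / (2 * log 2 (real n))"
    and x'_def: "x' = project x (sigma_cc f n x)"
    and p_dist: "distinct p" and p_set: "set p = set x'"
    and R_sub: "subseq R L'" and R_dist: "distinct R" and R_set: "set R = set L'"
    and R_lis: "real (lis_len p R) < real n powr t / log 2 (real n)"
    and run0: "xs 0 = x'"
    and run_step: "\<And>i. i < k \<Longrightarrow>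
        xs i \<noteq> [] \<and> subseq (ps i) (xs i) \<and> sorted_wrt (\<lambda>a b. lt_seq p b a) (ps i)
        \<and> 2 * length (ps i) \<ge> lds_len p (xs i)
        \<and> xs (Suc i) = exclude (xs i) (set (ps i))"
    and run_end: "xs k = []"
  shows "\<exists>i<k. real (lis_len (ps i) y) \<ge> real n powr t / 200"
proof (rule ccontr)
  assume "\<not> ?thesis"
  hence y_few: "real (lis_len (ps i) y) < real n powr t / 200" if "i < k" for i
    using that by auto
  interpret peeling_run p xs ps k
    using p_dist p_set run0 run_step run_end by unfold_locales auto
  have "subseq L x" and "subseq L y" and "subseq L' L"
    using lcs by (auto simp: is_lcs_def L'_def project_def)
  have "subseq L' x'"
    unfolding L'_def x'_def using \<open>subseq L x\<close> n_def by (intro subseq_project_sigma_co_sigma_cc) auto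
  have "subseq L' y"
    using \<open>subseq L' L\<close> \<open>subseq L y\<close> by (rule subseq_order.order_trans)
  obtain D where "subseq D R" and D_decreasing: "sorted_wrt (\<lambda>a b. lt_seq p b a) D"
    and R_D: "length R \<le> lis_len p R * length D"
    using exists_long_decreasing_subseq[OF p_dist R_dist] list_emb_set[OF \<open>subseq L' x'\<close>] R_set p_set
    by auto
  have D_x': "subseq D (xs 0)" and D_y: "subseq D y"
    using \<open>subseq D R\<close> R_sub \<open>subseq L' x'\<close> \<open>subseq L' y\<close> run0 by (auto intro: subseq_order.order_trans)
  have "0 < real (length L) / (2 * log 2 (real n))"
    using L_len n_ge by (intro divide_pos_pos) auto
  hence "D \<noteq> []"
    using L'_len R_D R_set by (metis length_greater_0_conv less_le_trans list.size(3) mult_0_right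
        not_less of_nat_0 set_empty)
  have "real (length D) ^ 2 < 8 * (real n powr t / 200) * card (set x')"
    using length_D_squared_bound[OF D_x' D_decreasing \<open>D \<noteq> []\<close> D_y y_few] run0 by simp
  moreover have "length L' \<le> 2 * f * (lis_len p R * length D)"
    using length_project_sigma_co_le[of L f "2 * f"] R_D R_set distinct_card[OF R_dist]
    unfolding L'_def by (metis le_trans mult_le_mono2)
  hence "real (length L') \<le> 2 * real f * real (lis_len p R) * real (length D)"
    by (metis of_nat_mono of_nat_mult of_nat_numeral mult.assoc)
  moreover have "f * card (set x') \<le> n"
    using card_set_project_sigma_cc_le[of f x n] n_def unfolding x'_def by simp
  hence "real f * real (card (set x')) \<le> real n"
    by (metis of_nat_mono of_nat_mult)
  ultimately show False
    using n_ge t_le f_ge f_lt L_len L'_len R_lis \<open>D \<noteq> []\<close>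
    by (intro powr_bounds_contradiction[where n = "real n" and t = t and f = "real f"
          and a = "real (lis_len p R)" and d = "real (length D)" and m = "real (card (set x'))"
          and l = "real (length L)" and l' = "real (length L')"])
      auto
qed

end
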